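(* Let $k$ be a positive integer and let $G$ be a $2k$-connected $(P_2\cup kP_1)$-free graph. Let $u,v$ be distinct vertices of $G$, let $P$ be a longest $(u,v)$-path in $G$, oriented from $u$ to $v$, and suppose $V(P)\neq V(G)$. Let $x\in V(G)\setminus V(P)$ and write $N_P(x)=\{x_1,\dots,x_t\}$ in the order of appearance on $P$ from $u$ to $v$. Let $S_0$ be the set of vertices of $P$ preceding $x_1$, let $S_t$ be the set of vertices of $P$following $x_t$, and for $i\in\{1,\dots,t-1\}$ let $S_i$ be the set of vertices of $P$ strictly between $x_i$ and $x_{i+1}$. For $i\in\{1,\dots,t\}$ let $S_i'=\{x_i^{+j}: 1\le j\le |S_i|,\ j\text{ odd}\}$, let $S_0'=\{x_1^{-j}: 1\le j\le |S_0|,\ j\text{ odd}\}$, and let $S'=\bigcup_{i=0}^t S_i'$. Then $S'$ is an independent set in $G$, and no vertex of $V(G)\setminus V(P)$ has a neighbor in $S'$. Consequently $(V(G)\setminus V(P))\cup S'$ is an independent set.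
   Context: All graphs are finite and simple. For a graph $H$, a graph $G$ is $H$-free if $G$ contains no induced subgraph isomorphic to $H$; $P_2\cup kP_1$ is the disjoint union of an edge and $k$ isolated vertices. A $(u,v)$-path is a path with endpoints $u$ and $v$. $N_P(x)$ is the set of neighbors of $x$ lying on $P$. For a vertex $w$ of the oriented path $P$, $w^{+}$ (also $w^{+1}$) is its successor and $w^{-}$ (also $w^{-1}$) its predecessor on $P$, and $w^{+\ell}$, $w^{-\ell}$ denote the successor of $w^{+(\ell-1)}$, resp. predecessor of $w^{-(\ell-1)}$. *)

theory Defs
  imports Main
begin

definition simple_graph :: "'a set \<Rightarrow> ('a \<Rightarrow> 'a \<Rightarrow> bool) \<Rightarrow> bool" where
  "simple_graph V E \<longleftrightarrow> finite V \<and> (\<forall>a b. E a b \<longrightarrow> a \<in> V \<and> b \<in> V)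
     \<and> (\<forall>a b. E a b \<longrightarrow> E b a) \<and> (\<forall>a. \<not> E a a)"

definition is_path :: "'a set \<Rightarrow> ('a \<Rightarrow> 'a \<Rightarrow> bool) \<Rightarrow> 'a list \<Rightarrow> bool" where
  "is_path V E P \<longleftrightarrow> P \<noteq> [] \<and> distinct P \<and> set P \<subseteq> V
     \<and> (\<forall>i. Suc i < length P \<longrightarrow> E (P ! i) (P ! Suc i))"

definition uv_path :: "'a set \<Rightarrow> ('a \<Rightarrow> 'a \<Rightarrow> bool) \<Rightarrow> 'a \<Rightarrow> 'a \<Rightarrow> 'a list \<Rightarrow> bool" where
  "uv_path V E u v P \<longleftrightarrow> is_path V E P \<and> hd P = u \<and> last P = v"

definition longest_uv_path :: "'a set \<Rightarrow> ('a \<Rightarrow> 'a \<Rightarrow> bool) \<Rightarrow> 'a \<Rightarrow> 'a \<Rightarrow> 'a list \<Rightarrow> bool" where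
  "longest_uv_path V E u v P \<longleftrightarrow> uv_path V E u v P
     \<and> (\<forall>Q. uv_path V E u v Q \<longrightarrow> length Q \<le> length P)"

definition connected_graph :: "'a set \<Rightarrow> ('a \<Rightarrow> 'a \<Rightarrow> bool) \<Rightarrow> bool" where
  "connected_graph V E \<longleftrightarrow> (\<forall>a\<in>V. \<forall>b\<in>V. \<exists>P. uv_path V E a b P)"

definition del_adj :: "('a \<Rightarrow> 'a \<Rightarrow> bool) \<Rightarrow> 'a set \<Rightarrow> 'a \<Rightarrow> 'a \<Rightarrow> bool" where
  "del_adj E S = (\<lambda>a b. E a b \<and> a \<notin> S \<and> b \<notin> S)"

definition k_connected :: "'a set \<Rightarrow> ('a \<Rightarrow> 'a \<Rightarrow> bool) \<Rightarrow> nat \<Rightarrow> bool" where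
  "k_connected V E k \<longleftrightarrow> card V > k
     \<and> (\<forall>S. S \<subseteq> V \<longrightarrow> card S < k \<longrightarrow> connected_graph (V - S) (del_adj E S))"

definition has_induced :: "'b set \<Rightarrow> ('b \<Rightarrow> 'b \<Rightarrow> bool) \<Rightarrow> 'a set \<Rightarrow> ('a \<Rightarrow> 'a \<Rightarrow> bool) \<Rightarrow> bool" where
  "has_induced VH EH V E \<longleftrightarrow> (\<exists>f. inj_on f VH \<and> f ` VH \<subseteq> V
     \<and> (\<forall>a\<in>VH. \<forall>b\<in>VH. EH a b \<longleftrightarrow> E (f a) (f b)))"

definition H_free :: "'b set \<Rightarrow> ('b \<Rightarrow> 'b \<Rightarrow> bool) \<Rightarrow> 'a set \<Rightarrow> ('a \<Rightarrow> 'a \<Rightarrow> bool) \<Rightarrow> bool" where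
  "H_free VH EH V E \<longleftrightarrow> \<not> has_induced VH EH V E"

definition P2kP1_V :: "nat \<Rightarrow> nat set" where
  "P2kP1_V k = {0..k+1}"

definition P2kP1_E :: "nat \<Rightarrow> nat \<Rightarrow> bool" where
  "P2kP1_E a b \<longleftrightarrow> (a = 0 \<and> b = 1) \<or> (a = 1 \<and> b = 0)"

definition independent :: "'a set \<Rightarrow> ('a \<Rightarrow> 'a \<Rightarrow> bool) \<Rightarrow> 'a set \<Rightarrow> bool" where
  "independent V E S \<longleftrightarrow> S \<subseteq> V \<and> (\<forall>a\<in>S. \<forall>b\<in>S. \<not> E a b)"

text \<open>Positions on P (0-based) of the neighbours of x, increasing, i.e.
the vertices x_1,...,x_t are P ! (nbr_pos E P x ! (i-1)).\<close>

definition nbr_pos :: "('a \<Rightarrow> 'a \<Rightarrow> bool) \<Rightarrow> 'a list \<Rightarrow> 'a \<Rightarrow> nat list" where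
  "nbr_pos E P x = sorted_list_of_set {i. i < length P \<and> E x (P ! i)}"

definition xpos :: "('a \<Rightarrow> 'a \<Rightarrow> bool) \<Rightarrow> 'a list \<Rightarrow> 'a \<Rightarrow> nat \<Rightarrow> nat" where
  "xpos E P x i = nbr_pos E P x ! (i - 1)"

definition seg :: "('a \<Rightarrow> 'a \<Rightarrow> bool) \<Rightarrow> 'a list \<Rightarrow> 'a \<Rightarrow> nat \<Rightarrow> 'a set" where
  "seg E P x i =
     (let t = length (nbr_pos E P x) in
      if i = 0 then {P ! j | j. j < xpos E P x 1}
      else if i < t then {P ! j | j. xpos E P x i < j \<and> j < xpos E P x (i + 1)}
      else {P ! j | j. xpos E P x t < j \<and> j < length P})"

definition seg' :: "('a \<Rightarrow> 'a \<Rightarrow> bool) \<Rightarrow> 'a list \<Rightarrow> 'a \<Rightarrow> nat \<Rightarrow> 'a set" where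
  "seg' E P x i =
     (if i = 0 then {P ! (xpos E P x 1 - j) | j. 1 \<le> j \<and> j \<le> card (seg E P x 0) \<and> odd j}
      else {P ! (xpos E P x i + j) | j. 1 \<le> j \<and> j \<le> card (seg E P x i) \<and> odd j})"

text \<open>S' = union of S_0', ..., S_t' (empty when x has no neighbour on P,
where the construction is not defined).\<close>

definition Sprime :: "('a \<Rightarrow> 'a \<Rightarrow> bool) \<Rightarrow> 'a list \<Rightarrow> 'a \<Rightarrow> 'a set" where
  "Sprime E P x =
     (let t = length (nbr_pos E P x) in
      if t = 0 then {} else (\<Union>i\<in>{0..t}. seg' E P x i))"

end

theory Submission
  imports Defs
begin

(* Let T consist of x and the successors x_i^+ of its neighbours on P, and let F be the set of
   vertices outside T without a neighbour in T. Rerouting the longest path P shows that x has no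
   neighbour off P, so t \<ge> 2k by 2k-connectivity, and that T is independent. As G is
   (P_2 \<union> kP_1)-free and |T| > k, the set T \<union> F is independent, and a vertex with a neighbour
   in T misses fewer than k vertices of T. Hence a vertex off P other than x with a neighbour in T
   would be adjacent to two of the x_i^+, and so would both ends of an edge w w^+ of P outside
   T \<union> F with w not adjacent to x; either configuration lets P be lengthened. So V(G) - V(P) lies
   in T \<union> F, and along a stretch of P containing no neighbour of x, membership in T \<union> F
   alternates. Starting from x_i^+ \<in> T, and backwards from x_1 \<notin> T \<union> F, this puts S' into
   T \<union> F. *)

definition slice :: "'a list \<Rightarrow> nat \<Rightarrow> nat \<Rightarrow> 'a list" where
  "slice xs i j = take (j - i) (drop i xs)"

lemma slice_append: "i \<le> j \<Longrightarrow> j \<le> l \<Longrightarrow> slice xs i j @ slice xs j l = slice xs i l"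
proof -
  assume "i \<le> j" "j \<le> l"
  then have "l - i = (j - i) + (l - j)" by simp
  then have "take (l - i) (drop i xs)
      = take (j - i) (drop i xs) @ take (l - j) (drop (j - i) (drop i xs))"
    by (simp only: take_add)
  then show ?thesis using \<open>i \<le> j\<close> by (simp add: slice_def)
qed

lemma slice_full: "slice xs 0 (length xs) = xs"
  by (simp add: slice_def)

lemma slice_Nil_iff: "j \<le> length xs \<Longrightarrow> slice xs i j = [] \<longleftrightarrow> j \<le> i"
  by (auto simp: slice_def)

lemma hd_slice: "i < j \<Longrightarrow> j \<le> length xs \<Longrightarrow> hd (slice xs i j) = xs ! i"
  by (simp add: slice_def hd_drop_conv_nth)

lemma last_slice: "i < j \<Longrightarrow> j \<le> length xs \<Longrightarrow> last (slice xs i j) = xs ! (j - 1)"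
  by (simp add: slice_def last_conv_nth)

lemma strict_sorted_next_le:
  fixes xs :: "'a::linorder list"
  assumes "sorted_wrt (<) xs" "r \<in> set xs" "l < length xs" "xs ! l < r"
  shows "Suc l < length xs \<and> xs ! Suc l \<le> r"
proof -
  obtain m where m: "m < length xs" "xs ! m = r" using assms(2) by (auto simp: in_set_conv_nth)
  have sorted: "sorted xs" using assms(1) by (rule strict_sorted_imp_sorted)
  have "l < m"
  proof (rule ccontr)
    assume "\<not> l < m"
    then have "xs ! m \<le> xs ! l" using sorted_nth_mono[OF sorted] assms(3) by simp
    then show False using m assms(4) by simp
  qed
  then show ?thesis using m sorted_nth_mono[OF sorted, of "Suc l" m] by auto
qed

lemma strict_sorted_first_le:
  fixes xs :: "'a::linorder list"
  assumes "sorted_wrt (<) xs" "r \<in> set xs"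
  shows "xs ! 0 \<le> r"
proof -
  obtain m where "m < length xs" "xs ! m = r" using assms(2) by (auto simp: in_set_conv_nth)
  then show ?thesis using sorted_nth_mono[OF strict_sorted_imp_sorted[OF assms(1)], of 0 m] by simp
qed

lemma card_nth_image_le: "card {xs ! j | j. a < j \<and> j < b} \<le> b - Suc a"
proof -
  have "{j. a < j \<and> j < b} = {a<..<b}" by auto
  then have "card {xs ! j | j. a < j \<and> j < b} \<le> card {a<..<b}"
    unfolding setcompr_eq_image by (metis card_image_le finite_greaterThanLessThan)
  then show ?thesis by simp
qed

lemma two_le_card_imp_less_pair:
  fixes S :: "'a::linorder set"
  assumes "2 \<le> card S"
  obtains a b where "a \<in> S" "b \<in> S" "a < b"
proof -
  obtain S' where S': "S' \<subseteq> S" "card S' = 2"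
    using obtain_subset_with_card_n[OF assms] .
  then obtain a b where "S' = {a, b}" "a \<noteq> b"
    by (meson card_2_iff)
  then show thesis using that S'(1) by (metis insert_subset linorder_neq_iff)
qed

lemma card_le_card_Diff_Diff_Int:
  assumes "finite J" "A \<subseteq> J" "B \<subseteq> J"
  shows "card J \<le> card (J - A) + card (J - B) + card (A \<inter> B)"
proof -
  have "J = (J - A) \<union> (J - B) \<union> (A \<inter> B)" using assms(2,3) by blast
  then have "card J \<le> card ((J - A) \<union> (J - B)) + card (A \<inter> B)"
    using card_Un_le by metis
  also have "\<dots> \<le> card (J - A) + card (J - B) + card (A \<inter> B)"
    using card_Un_le by simp
  finally show ?thesis .
qed

lemma is_path_iff:
  "is_path V E P \<longleftrightarrow> P \<noteq> [] \<and> distinct P \<and> set P \<subseteq> V \<and> successively E P"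
  by (simp add: is_path_def successively_conv_nth)

lemma rtranclp_restrict_imp_path:
  assumes "(\<lambda>a b. E a b \<and> a \<in> H \<and> b \<in> H)\<^sup>*\<^sup>* a b" "a \<in> H" "H \<subseteq> V"
  obtains Q where "is_path V E Q" "hd Q = a" "last Q = b" "set Q \<subseteq> H"
proof -
  from assms(1) have "\<exists>Q. is_path V E Q \<and> hd Q = a \<and> last Q = b \<and> set Q \<subseteq> H"
  proof (induction rule: rtranclp_induct)
    case base
    then show ?case using assms(2,3) by (intro exI[of _ "[a]"]) (auto simp: is_path_iff)
  next
    case (step b c)
    then obtain Q where Q: "is_path V E Q" "hd Q = a" "last Q = b" "set Q \<subseteq> H" by blast
    show ?case
    proof (cases "c \<in> set Q")
      case True
      then obtain ys zs where "Q = ys @ c # zs" by (meson split_list)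
      with Q show ?thesis
        by (intro exI[of _ "ys @ [c]"]) (auto simp: is_path_iff successively_append_iff hd_append)
    next
      case False
      with Q step.hyps(2) assms(3) show ?thesis
        by (intro exI[of _ "Q @ [c]"]) (auto simp: is_path_iff successively_append_iff)
    qed
  qed
  then show thesis using that by blast
qed

lemma successively_set_subset:
  assumes "successively R xs" "xs \<noteq> []" "hd xs \<in> C" "\<And>c d. c \<in> C \<Longrightarrow> R c d \<Longrightarrow> d \<in> C"
  shows "set xs \<subseteq> C"
  using assms(1-3)
proof (induction xs)
  case (Cons c xs)
  then show ?case using assms(4)[of c "hd xs"] by (cases "xs = []") (auto simp: successively_Cons)
qed simp

lemma k_connected_small_separator:
  assumes "k_connected V E k" "S \<subseteq> V" "card S < k" "a \<in> C" "C \<subseteq> V - S"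
    and closed: "\<And>c d. c \<in> C \<Longrightarrow> E c d \<Longrightarrow> d \<in> C \<union> S"
  shows "V - S \<subseteq> C"
proof
  fix b assume "b \<in> V - S"
  moreover have "a \<in> V - S" using assms(4,5) by blast
  ultimately obtain Q where Q: "uv_path (V - S) (del_adj E S) a b Q"
    using assms(1-3) unfolding k_connected_def connected_graph_def by blast
  have "set Q \<subseteq> C"
    by (rule successively_set_subset[where R = "del_adj E S"])
       (use Q assms(4) closed in \<open>auto simp: uv_path_def is_path_iff del_adj_def\<close>)
  then show "b \<in> C" using Q by (auto simp: uv_path_def is_path_def)
qed

definition P2kP1_embedding :: "'a \<Rightarrow> 'a \<Rightarrow> (nat \<Rightarrow> 'a) \<Rightarrow> nat \<Rightarrow> 'a" where
  "P2kP1_embedding a b g m = (if m = 0 then a else if m = 1 then b else g (m - 2))"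

lemma inj_on_P2kP1_embedding:
  assumes "a \<noteq> b" "a \<notin> I" "b \<notin> I" "bij_betw g {0..<k} I"
  shows "inj_on (P2kP1_embedding a b g) (P2kP1_V k)"
proof (rule inj_onI)
  let ?f = "P2kP1_embedding a b g"
  fix m n assume m: "m \<in> P2kP1_V k" and n: "n \<in> P2kP1_V k" and eq: "?f m = ?f n"
  have gI: "?f l \<in> I" if "2 \<le> l" "l \<le> k + 1" for l
    using that assms(4) by (auto simp: P2kP1_embedding_def bij_betw_def)
  show "m = n"
  proof (cases "2 \<le> m \<and> 2 \<le> n")
    case True
    then have "g (m - 2) = g (n - 2)" "m - 2 \<in> {0..<k}" "n - 2 \<in> {0..<k}"
      using eq m n by (auto simp: P2kP1_embedding_def P2kP1_V_def)
    then have "m - 2 = n - 2" using assms(4) by (auto simp: bij_betw_def dest: inj_onD)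
    then show ?thesis using True by linarith
  next
    case False
    have "m \<le> 1 \<Longrightarrow> ?f m \<notin> I" "n \<le> 1 \<Longrightarrow> ?f n \<notin> I"
      using assms(2,3) by (auto simp: P2kP1_embedding_def)
    then show ?thesis
      using False eq m n gI[of m] gI[of n] assms(1)
      by (cases "m \<le> 1"; cases "n \<le> 1")
        (auto simp: P2kP1_embedding_def P2kP1_V_def split: if_splits)
  qed
qed

lemma has_induced_P2kP1:
  assumes "simple_graph V E" "E a b" "independent V E I" "finite I" "card I = k" "a \<notin> I" "b \<notin> I"
    and anticomplete: "\<forall>z\<in>I. \<not> E a z \<and> \<not> E b z"
  shows "has_induced (P2kP1_V k) P2kP1_E V E"
proof -
  obtain g where g: "bij_betw g {0..<k} I"
    using ex_bij_betw_nat_finite[OF assms(4)] assms(5) by blast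
  let ?f = "P2kP1_embedding a b g"
  have ab: "a \<noteq> b" "a \<in> V" "b \<in> V" "E b a"
    and E_irrefl: "\<And>c. \<not> E c c" and E_sym: "\<And>c d. E c d \<Longrightarrow> E d c"
    using assms(1,2) by (auto simp: simple_graph_def)
  have gI: "?f m \<in> I" if "2 \<le> m" "m \<le> k + 1" for m
    using that g by (auto simp: P2kP1_embedding_def bij_betw_def)
  have fab: "?f m = a \<or> ?f m = b" if "m \<le> 1" for m
    using that by (auto simp: P2kP1_embedding_def)
  have into_V: "?f m \<in> V" if "m \<in> P2kP1_V k" for m
    using that fab[of m] gI[of m] ab assms(3) by (force simp: P2kP1_V_def independent_def)
  have edges: "P2kP1_E m n \<longleftrightarrow> E (?f m) (?f n)" if "m \<in> P2kP1_V k" "n \<in> P2kP1_V k" for m n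
  proof -
    consider "m \<le> 1" "n \<le> 1" | "2 \<le> m" "2 \<le> n" | "m \<le> 1" "2 \<le> n" | "2 \<le> m" "n \<le> 1"
      by linarith
    then show ?thesis
    proof cases
      case 1
      then show ?thesis using ab E_irrefl assms(2) by (auto simp: P2kP1_E_def P2kP1_embedding_def)
    next
      case 2
      then show ?thesis
        using that gI assms(3) by (auto simp: P2kP1_E_def P2kP1_V_def independent_def)
    next
      case 3
      then show ?thesis
        using that fab[of m] gI[of n] anticomplete by (auto simp: P2kP1_E_def P2kP1_V_def)
    next
      case 4
      then show ?thesis
        using that fab[of n] gI[of m] anticomplete E_sym by (auto simp: P2kP1_E_def P2kP1_V_def)
    qed
  qed
  show ?thesis
    unfolding has_induced_def
    using inj_on_P2kP1_embedding[OF ab(1) assms(6,7) g] into_V edges by (intro exI[of _ ?f]) blast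
qed

lemma P2kP1_free_anticomplete_card_less:
  assumes "simple_graph V E" "H_free (P2kP1_V k) P2kP1_E V E"
    and "E a b" "independent V E I" "finite I" "a \<notin> I" "b \<notin> I"
    and "\<forall>z\<in>I. \<not> E a z \<and> \<not> E b z"
  shows "card I < k"
proof (rule ccontr)
  assume "\<not> card I < k"
  then obtain I' where I': "I' \<subseteq> I" "card I' = k"
    by (meson not_less obtain_subset_with_card_n)
  moreover have "independent V E I'" "finite I'"
    using assms(4,5) I'(1) by (auto simp: independent_def intro: finite_subset)
  ultimately have "has_induced (P2kP1_V k) P2kP1_E V E"
    by (intro has_induced_P2kP1[OF assms(1,3), of I']) (use assms(6-8) I' in auto)
  then show False using assms(2) by (simp add: H_free_def)
qed

section \<open>Rerouting a longest path\<close>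

locale longest_path =
  fixes V :: "'a set" and E :: "'a \<Rightarrow> 'a \<Rightarrow> bool" and u v :: 'a and P :: "'a list"
  assumes graph: "simple_graph V E" and longest: "longest_uv_path V E u v P"
begin

lemma E_sym: "E a b \<Longrightarrow> E b a"
  using graph by (auto simp: simple_graph_def)

lemma E_irrefl: "\<not> E a a"
  using graph by (auto simp: simple_graph_def)

lemma successively_converse [simp]: "successively (\<lambda>a b. E b a) xs \<longleftrightarrow> successively E xs"
  by (meson successively_mono E_sym)

lemma path: "P \<noteq> []" "distinct P" "set P \<subseteq> V" "successively E P"
  using longest by (auto simp: longest_uv_path_def uv_path_def is_path_iff)

lemma adj: "Suc i < length P \<Longrightarrow> E (P ! i) (P ! Suc i)"
  using path(4) by (rule successively_nth)

lemma nth_eq_iff: "i < length P \<Longrightarrow> j < length P \<Longrightarrow> P ! i = P ! j \<longleftrightarrow> i = j"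
  using path(2) by (simp add: nth_eq_iff_index_eq)

lemma detour_not_longer:
  assumes dec: "P = A @ B @ C" and "A \<noteq> []" "C \<noteq> []"
    and M: "M \<noteq> []" "distinct M" "set M \<subseteq> set B \<union> (V - set P)" "successively E M"
    and "E (last A) (hd M)" "E (last M) (hd C)"
  shows "length M \<le> length B"
proof -
  have "uv_path V E u v (A @ M @ C)"
    using longest path assms
    by (auto simp: longest_uv_path_def uv_path_def is_path_iff successively_append_iff)
  then show ?thesis
    using longest by (auto simp: longest_uv_path_def dec)
qed

lemma P_eq_slices4:
  assumes "0 < i" "i \<le> j" "j \<le> l" "l < length P"
  shows "P = slice P 0 i @ (slice P i j @ slice P j l) @ slice P l (length P)"
  using assms by (simp add: slice_append slice_full)

lemma P_eq_slices3:
  assumes "0 < i" "i \<le> j" "j < length P"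
  shows "P = slice P 0 i @ slice P i j @ slice P j (length P)"
  using assms by (simp add: slice_append slice_full)

lemma successively_slice [simp]: "successively E (slice P i j)"
proof -
  have "successively E (take (j - i) (drop i P))"
    using path(4) by (metis append_take_drop_id successively_append_iff)
  then show ?thesis by (simp add: slice_def)
qed

lemma in_set_sliceD: "y \<in> set (slice P i j) \<Longrightarrow> y \<in> set P"
  by (auto simp: slice_def dest: in_set_takeD in_set_dropD)

lemma distinct_slices4:
  assumes "0 < i" "i \<le> j" "j \<le> l" "l < length P"
  shows "distinct (slice P 0 i @ slice P i j @ slice P j l @ slice P l (length P))"
  using path(2) P_eq_slices4[OF assms] by simp

lemmas slice_simps = hd_slice last_slice slice_Nil_iff successively_append_iff successively_Cons
  hd_rev last_rev

lemma detour_end_not_adjacent_to_successor: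
  assumes "Suc i < length P" "is_path V E Q" "set Q \<inter> set P = {}" "E (P ! i) (hd Q)"
  shows "\<not> E (last Q) (P ! Suc i)"
proof
  assume "E (last Q) (P ! Suc i)"
  have "length Q \<le> length (slice P (Suc i) (Suc i))"
    by (rule detour_not_longer[OF P_eq_slices3[of "Suc i" "Suc i"]])
      (use assms \<open>E (last Q) (P ! Suc i)\<close> in \<open>auto simp: slice_simps is_path_iff\<close>)
  then show False using assms(2) by (simp add: slice_def is_path_iff)
qed

lemma successors_not_adjacent:
  assumes "i < j" "Suc j < length P" "is_path V E Q" "set Q \<inter> set P = {}"
    "E (P ! i) (hd Q)" "E (last Q) (P ! j)"
  shows "\<not> E (P ! Suc i) (P ! Suc j)"
proof
  assume "E (P ! Suc i) (P ! Suc j)"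
  let ?B = "slice P (Suc i) (Suc j)"
  have "distinct (slice P 0 (Suc i) @ ?B @ slice P (Suc j) (length P))"
    using path(2) P_eq_slices3[of "Suc i" "Suc j"] assms(1,2) by simp
  then have "length (Q @ rev ?B) \<le> length ?B"
    by (intro detour_not_longer[OF P_eq_slices3[of "Suc i" "Suc j"]])
      (use assms \<open>E (P ! Suc i) (P ! Suc j)\<close> in
        \<open>auto simp: slice_simps is_path_iff dest: in_set_sliceD\<close>)
  then show False using assms(3) by (simp add: is_path_iff)
qed

lemma off_path_vertex_not_adjacent_to_two_successors:
  assumes "x \<in> V - set P" "y \<in> V - set P" "x \<noteq> y" "i < j" "Suc j < length P"
    "E x (P ! i)" "E x (P ! j)" "E y (P ! Suc i)" "E y (P ! Suc j)"
  shows False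
proof -
  let ?B = "slice P (Suc i) (Suc j)"
  have "distinct (slice P 0 (Suc i) @ ?B @ slice P (Suc j) (length P))"
    using path(2) P_eq_slices3[of "Suc i" "Suc j"] assms(4,5) by simp
  then have "length (x # rev ?B @ [y]) \<le> length ?B"
    by (intro detour_not_longer[OF P_eq_slices3[of "Suc i" "Suc j"]])
      (use assms assms(6-9)[THEN E_sym] in \<open>auto simp: slice_simps dest: in_set_sliceD\<close>)
  then show False by simp
qed

lemma path_edge_not_adjacent_to_two_successors:
  assumes x: "x \<in> V - set P" "E x (P ! a)" "E x (P ! b)" and ab: "a < b" "Suc b < length P"
    and p: "Suc p < length P"
    and adj: "E (P ! p) (P ! Suc a)" "E (P ! p) (P ! Suc b)"
      "E (P ! Suc p) (P ! Suc a)" "E (P ! Suc p) (P ! Suc b)"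
  shows False
proof -
  note facts = x x(2,3)[THEN E_sym] ab p adj adj[THEN E_sym]
  consider "p < a" | "b < p" | "a < p" "p < b" | "p = a \<or> p = b"
    by linarith
  then show False
  proof cases
    case 1
    let ?B1 = "slice P (Suc p) (Suc a)" and ?B2 = "slice P (Suc a) (Suc b)"
    have "length (?B2 @ x # rev ?B1) \<le> length (?B1 @ ?B2)"
      by (rule detour_not_longer[OF P_eq_slices4[of "Suc p" "Suc a" "Suc b"]])
        (use 1 facts distinct_slices4[of "Suc p" "Suc a" "Suc b"] in
          \<open>auto simp: slice_simps dest: in_set_sliceD\<close>)
    then show False by simp
  next
    case 2
    let ?B1 = "slice P (Suc a) (Suc b)" and ?B2 = "slice P (Suc b) (Suc p)"
    have "length (x # rev ?B1 @ rev ?B2) \<le> length (?B1 @ ?B2)"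
      by (rule detour_not_longer[OF P_eq_slices4[of "Suc a" "Suc b" "Suc p"]])
        (use 2 facts distinct_slices4[of "Suc a" "Suc b" "Suc p"] in
          \<open>auto simp: slice_simps dest: in_set_sliceD\<close>)
    then show False by simp
  next
    case 3
    let ?B1 = "slice P (Suc a) (Suc p)" and ?B2 = "slice P (Suc p) (Suc b)"
    have "length (x # rev ?B2 @ ?B1) \<le> length (?B1 @ ?B2)"
      by (rule detour_not_longer[OF P_eq_slices4[of "Suc a" "Suc p" "Suc b"]])
        (use 3 facts distinct_slices4[of "Suc a" "Suc p" "Suc b"] in
          \<open>auto simp: slice_simps dest: in_set_sliceD\<close>)
    then show False by simp
  next
    case 4
    then show False using adj(3,4) E_irrefl by blast
  qed
qed

end

section \<open>The neighbours of x on P\<close>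

locale off_path_vertex = longest_path +
  fixes k :: nat and x :: 'a
  assumes k_pos: "1 \<le> k" and connected: "k_connected V E (2 * k)"
    and free: "H_free (P2kP1_V k) P2kP1_E V E" and ends_distinct: "u \<noteq> v"
    and x: "x \<in> V - set P"
begin

lemma two_le_length_P: "2 \<le> length P"
proof -
  have "P ! 0 = u" "P ! (length P - 1) = v"
    using longest path(1) by (auto simp: longest_uv_path_def uv_path_def hd_conv_nth last_conv_nth)
  then have "length P \<noteq> 1" using ends_distinct by auto
  moreover have "length P \<noteq> 0" using path(1) by simp
  ultimately show ?thesis by linarith
qed

lemma card_anticomplete_less:
  "E a b \<Longrightarrow> independent V E I \<Longrightarrow> finite I \<Longrightarrow> a \<notin> I \<Longrightarrow> b \<notin> I \<Longrightarrow>
    \<forall>z\<in>I. \<not> E a z \<and> \<not> E b z \<Longrightarrow> card I < k"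
  using P2kP1_free_anticomplete_card_less[OF graph free] by blast

definition component :: "'a set" where
  "component = {c. (\<lambda>a b. E a b \<and> a \<in> V - set P \<and> b \<in> V - set P)\<^sup>*\<^sup>* x c}"

definition attachments :: "nat set" where
  "attachments = {i. i < length P \<and> (\<exists>c\<in>component. E c (P ! i))}"

lemma component_off_path: "component \<subseteq> V - set P"
proof
  fix c assume "c \<in> component"
  then have "(\<lambda>a b. E a b \<and> a \<in> V - set P \<and> b \<in> V - set P)\<^sup>*\<^sup>* x c"
    by (simp add: component_def)
  then show "c \<in> V - set P"
    by (induction rule: rtranclp_induct) (use x in auto)
qed

lemma x_in_component: "x \<in> component"
  by (simp add: component_def)

lemma component_closed: "c \<in> component \<Longrightarrow> E c d \<Longrightarrow> d \<notin> set P \<Longrightarrow> d \<in> component"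
proof -
  assume "c \<in> component" "E c d" "d \<notin> set P"
  moreover have "d \<in> V" using \<open>E c d\<close> graph by (auto simp: simple_graph_def)
  ultimately show ?thesis
    using component_off_path unfolding component_def by (auto intro: rtranclp.rtrancl_into_rtrancl)
qed

lemma component_connected:
  assumes "c \<in> component" "d \<in> component"
  obtains Q where "is_path V E Q" "hd Q = c" "last Q = d" "set Q \<inter> set P = {}"
proof -
  let ?R = "\<lambda>a b. E a b \<and> a \<in> V - set P \<and> b \<in> V - set P"
  have "symp ?R" using E_sym by (auto intro: sympI)
  then have "?R\<^sup>*\<^sup>* c x" using assms(1) by (simp add: component_def sympD symp_rtranclp)
  then have "?R\<^sup>*\<^sup>* c d" using assms(2) by (simp add: component_def)
  then obtain Q where Q: "is_path V E Q" "hd Q = c" "last Q = d" "set Q \<subseteq> V - set P"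
    by (rule rtranclp_restrict_imp_path) (use assms(1) component_off_path in auto)
  have "set Q \<inter> set P = {}" using Q(4) by blast
  with Q(1-3) show thesis by (rule that)
qed

lemma finite_attachments: "finite attachments"
  by (rule finite_subset[of _ "{..<length P}"]) (auto simp: attachments_def)

lemma attachment_successor_anticomplete:
  assumes "i \<in> attachments" "Suc i < length P" "c \<in> component"
  shows "\<not> E c (P ! Suc i)"
proof -
  obtain c0 where c0: "c0 \<in> component" "E c0 (P ! i)"
    using assms(1) by (auto simp: attachments_def)
  obtain Q where "is_path V E Q" "hd Q = c0" "last Q = c" "set Q \<inter> set P = {}"
    using component_connected[OF c0(1) assms(3)] .
  then show ?thesis using detour_end_not_adjacent_to_successor[OF assms(2)] E_sym[OF c0(2)] by blast
qed

lemma attachment_successors_nonadjacent: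
  assumes "i \<in> attachments" "j \<in> attachments" "Suc i < length P" "Suc j < length P"
  shows "\<not> E (P ! Suc i) (P ! Suc j)"
proof -
  have "\<not> E (P ! Suc i) (P ! Suc j)"
    if ij: "i \<in> attachments" "j \<in> attachments" "i < j" "Suc j < length P" for i j
  proof -
    obtain ci cj where "ci \<in> component" "E ci (P ! i)" "cj \<in> component" "E cj (P ! j)"
      using ij(1,2) by (auto simp: attachments_def)
    moreover obtain Q where "is_path V E Q" "hd Q = ci" "last Q = cj" "set Q \<inter> set P = {}"
      using component_connected[OF calculation(1,3)] .
    ultimately show ?thesis using successors_not_adjacent[OF ij(3,4)] E_sym by metis
  qed
  then show ?thesis
    using assms E_irrefl E_sym by (metis linorder_neq_iff)
qed

lemma card_attachments_le:
  assumes "y \<in> V - set P" "E x y"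
  shows "card attachments \<le> k"
proof -
  let ?L = "{i \<in> attachments. Suc i < length P}"
  let ?S = "(\<lambda>i. P ! Suc i) ` ?L"
  have y: "y \<in> component" using component_closed[OF x_in_component assms(2)] assms(1) by simp
  have "card ?S < k"
  proof (rule card_anticomplete_less[OF assms(2)])
    show "independent V E ?S"
      using path(3) attachment_successors_nonadjacent by (auto simp: independent_def)
    show "\<forall>z\<in>?S. \<not> E x z \<and> \<not> E y z"
      using attachment_successor_anticomplete x_in_component y by blast
  qed (use x assms(1) finite_attachments in auto)
  moreover have "card ?S = card ?L"
    by (rule card_image) (auto simp: inj_on_def nth_eq_iff)
  moreover have "card attachments \<le> card (insert (length P - 1) ?L)"
    using finite_attachments by (intro card_mono) (auto simp: attachments_def)
  then have "card attachments \<le> Suc (card ?L)"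
    using finite_attachments by (simp add: card_insert_if split: if_splits)
  ultimately show ?thesis by linarith
qed

(* Otherwise the at most k attachment points of the component of x would separate it from the
   rest of P. *)
lemma no_off_path_neighbour:
  assumes "y \<in> V - set P"
  shows "\<not> E x y"
proof
  assume xy: "E x y"
  let ?S = "(!) P ` attachments"
  have S: "?S \<subseteq> set P" "card ?S < 2 * k"
    using card_image_le[OF finite_attachments, of "(!) P"] card_attachments_le[OF assms xy] k_pos
    by (auto simp: attachments_def)
  have "V - ?S \<subseteq> component"
  proof (rule k_connected_small_separator[OF connected _ S(2) x_in_component])
    show "?S \<subseteq> V" "component \<subseteq> V - ?S"
      using S(1) path(3) component_off_path by auto
    show "d \<in> component \<union> ?S" if "c \<in> component" "E c d" for c d
    proof (cases "d \<in> set P")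
      case True
      then obtain i where "i < length P" "d = P ! i" by (auto simp: in_set_conv_nth)
      then show ?thesis using that by (auto simp: attachments_def)
    qed (use component_closed that in auto)
  qed
  moreover obtain i where i: "i < length P" "i \<notin> attachments"
  proof -
    have "0 \<notin> attachments \<or> 1 \<notin> attachments"
      using attachment_successor_anticomplete[of 0] two_le_length_P by (auto simp: attachments_def)
    moreover have "0 < length P" "1 < length P" using two_le_length_P by auto
    ultimately show thesis using that by blast
  qed
  then have "P ! i \<in> V - ?S"
    using path(3) by (auto simp: nth_eq_iff attachments_def)
  ultimately show False using component_off_path i(1) by auto
qed

definition nbr_idx :: "nat set" where
  "nbr_idx = {i. i < length P \<and> E x (P ! i)}"

lemma finite_nbr_idx: "finite nbr_idx"
  by (rule finite_subset[of _ "{..<length P}"]) (auto simp: nbr_idx_def)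

lemma card_nbr_idx: "2 * k \<le> card nbr_idx"
proof (rule ccontr)
  let ?S = "(!) P ` nbr_idx"
  assume "\<not> 2 * k \<le> card nbr_idx"
  then have S: "card ?S < 2 * k" "?S \<subseteq> set P"
    using card_image_le[OF finite_nbr_idx, of "(!) P"] by (auto simp: nbr_idx_def)
  have "V - ?S \<subseteq> {x}"
  proof (rule k_connected_small_separator[OF connected _ S(1)])
    show "?S \<subseteq> V" "{x} \<subseteq> V - ?S"
      using S(2) path(3) x by auto
    show "d \<in> {x} \<union> ?S" if "c \<in> {x}" "E c d" for c d
      using that no_off_path_neighbour graph
      by (auto simp: nbr_idx_def in_set_conv_nth simple_graph_def)
  qed simp
  then have "card V \<le> card (insert x ?S)"
    using finite_nbr_idx by (intro card_mono) auto
  also have "\<dots> \<le> Suc (card ?S)" using finite_nbr_idx by (simp add: card_insert_if)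
  finally show False using S(1) connected by (simp add: k_connected_def)
qed

section \<open>The independent set T \<union> F\<close>

definition succ_idx :: "nat set" where
  "succ_idx = {i \<in> nbr_idx. Suc i < length P}"

definition T :: "'a set" where
  "T = insert x ((\<lambda>i. P ! Suc i) ` succ_idx)"

definition F :: "'a set" where
  "F = {z \<in> V. z \<notin> T \<and> (\<forall>t\<in>T. \<not> E z t)}"

definition succ_nbrs :: "'a \<Rightarrow> nat set" where
  "succ_nbrs z = {i \<in> succ_idx. E z (P ! Suc i)}"

lemma finite_succ_idx: "finite succ_idx"
  using finite_nbr_idx by (simp add: succ_idx_def)

lemma succ_idxD: "i \<in> succ_idx \<Longrightarrow> E x (P ! i) \<and> Suc i < length P"
  by (simp add: succ_idx_def nbr_idx_def)

lemma card_succ_idx: "2 * k \<le> Suc (card succ_idx)"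
proof -
  have "card nbr_idx \<le> card (insert (length P - 1) succ_idx)"
    using finite_succ_idx by (intro card_mono) (auto simp: succ_idx_def nbr_idx_def)
  also have "\<dots> \<le> Suc (card succ_idx)"
    using finite_succ_idx by (simp add: card_insert_if)
  finally show ?thesis using card_nbr_idx by linarith
qed

lemma card_T: "card T = Suc (card succ_idx)"
proof -
  have "x \<notin> (\<lambda>i. P ! Suc i) ` succ_idx" "inj_on (\<lambda>i. P ! Suc i) succ_idx"
    using x by (auto simp: succ_idx_def inj_on_def nth_eq_iff)
  then show ?thesis using finite_succ_idx by (simp add: T_def card_image)
qed

lemma T_subset: "T \<subseteq> V"
  using x path(3) by (auto simp: T_def succ_idx_def)

lemma finite_T: "finite T"
  using finite_succ_idx by (simp add: T_def)

lemma T_independent: "independent V E T"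
proof -
  have Q: "is_path V E [x]" "set [x] \<inter> set P = {}"
    using x by (auto simp: is_path_def)
  have x_succ: "\<not> E x (P ! Suc i)" if "i \<in> succ_idx" for i
    using detour_end_not_adjacent_to_successor[of i "[x]"] Q succ_idxD[OF that] E_sym by auto
  have succ_succ: "\<not> E (P ! Suc i) (P ! Suc j)" if "i \<in> succ_idx" "j \<in> succ_idx" for i j
  proof (cases i j rule: linorder_cases)
    case less
    then show ?thesis
      using successors_not_adjacent[of i j "[x]"] Q succ_idxD[OF that(1)] succ_idxD[OF that(2)]
      by (auto dest: E_sym)
  next
    case greater
    then show ?thesis
      using successors_not_adjacent[of j i "[x]"] Q succ_idxD[OF that(1)] succ_idxD[OF that(2)]
      by (auto dest: E_sym)
  qed (simp add: E_irrefl)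
  show ?thesis
    unfolding independent_def T_def using T_subset x_succ succ_succ E_irrefl
    by (auto simp: T_def dest: E_sym)
qed

lemma independent_T_F: "independent V E (T \<union> F)"
  unfolding independent_def
proof (intro conjI ballI)
  show "T \<union> F \<subseteq> V" using T_subset by (auto simp: F_def)
  fix a b assume "a \<in> T \<union> F" "b \<in> T \<union> F"
  then consider "a \<in> T" "b \<in> T" | "a \<in> F" "b \<in> T" | "b \<in> F" "a \<in> T" | "a \<in> F" "b \<in> F"
    by blast
  then show "\<not> E a b"
  proof cases
    case 1
    then show ?thesis using T_independent by (simp add: independent_def)
  next
    case 2
    then show ?thesis by (simp add: F_def)
  next
    case 3
    then show ?thesis by (auto simp: F_def dest: E_sym)
  next
    case 4
    show ?thesis
    proof
      assume "E a b"
      then have "card T < k"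
        using 4 T_independent finite_T by (intro card_anticomplete_less) (auto simp: F_def)
      then show False using card_T card_succ_idx by linarith
    qed
  qed
qed

lemma card_missed_successors:
  assumes "z \<in> V" "z \<notin> T" "t \<in> T" "E z t"
  shows "card (succ_idx - succ_nbrs z) + of_bool (\<not> E z x) < k"
proof -
  let ?M = "(\<lambda>i. P ! Suc i) ` (succ_idx - succ_nbrs z) \<union> (if E z x then {} else {x})"
  have card_M: "card ?M = card (succ_idx - succ_nbrs z) + of_bool (\<not> E z x)"
  proof -
    have "inj_on (\<lambda>i. P ! Suc i) (succ_idx - succ_nbrs z)"
      "x \<notin> (\<lambda>i. P ! Suc i) ` (succ_idx - succ_nbrs z)"
      using x by (auto simp: succ_idx_def inj_on_def nth_eq_iff)
    then show ?thesis using finite_succ_idx by (auto simp: card_image)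
  qed
  have "card ?M \<le> card {t' \<in> T. \<not> E z t'}"
    using finite_T by (intro card_mono) (auto simp: T_def succ_nbrs_def)
  also have "\<dots> < k"
    using assms T_independent finite_T
    by (intro card_anticomplete_less[OF assms(4)]) (auto simp: independent_def)
  finally show ?thesis using card_M by simp
qed

lemma off_path_in_F:
  assumes "y \<in> V - set P" "y \<noteq> x"
  shows "y \<in> F"
proof -
  have yT: "y \<notin> T" using assms path(3) by (auto simp: T_def succ_idx_def)
  have "\<not> E y t" if "t \<in> T" for t
  proof
    assume "E y t"
    have "\<not> E y x" using no_off_path_neighbour[OF assms(1)] E_sym by blast
    then have "card (succ_idx - succ_nbrs y) + 2 \<le> k"
      using card_missed_successors[of y t] assms yT that \<open>E y t\<close> by simp
    moreover have "card (succ_idx - succ_nbrs y) = card succ_idx - card (succ_nbrs y)"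
      "card (succ_nbrs y) \<le> card succ_idx"
      using finite_succ_idx by (auto simp: succ_nbrs_def intro!: card_Diff_subset card_mono)
    ultimately have "2 \<le> card (succ_nbrs y)" using card_succ_idx by linarith
    then obtain i j where "i \<in> succ_nbrs y" "j \<in> succ_nbrs y" "i < j"
      by (rule two_le_card_imp_less_pair)
    then show False
      using off_path_vertex_not_adjacent_to_two_successors[of x y i j] x assms
      by (auto simp: succ_nbrs_def dest: succ_idxD)
  qed
  then show ?thesis using assms yT by (auto simp: F_def)
qed

lemma off_path_subset_T_F: "V - set P \<subseteq> T \<union> F"
  using off_path_in_F by (auto simp: T_def)

lemma nth_in_T_iff:
  assumes "q < length P"
  shows "P ! q \<in> T \<longleftrightarrow> 0 < q \<and> q - 1 \<in> nbr_idx"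
proof
  assume "P ! q \<in> T"
  moreover have "P ! q \<noteq> x" using x assms by auto
  ultimately obtain i where "i \<in> succ_idx" "P ! q = P ! Suc i" by (auto simp: T_def)
  then show "0 < q \<and> q - 1 \<in> nbr_idx" using assms by (auto simp: succ_idx_def nth_eq_iff)
next
  assume "0 < q \<and> q - 1 \<in> nbr_idx"
  then have "q - 1 \<in> succ_idx" "Suc (q - 1) = q" using assms by (auto simp: succ_idx_def)
  then show "P ! q \<in> T" unfolding T_def by (metis image_eqI insertI2)
qed

lemma path_edge_meets_T_F:
  assumes "p \<notin> nbr_idx" "Suc p < length P"
  shows "P ! p \<in> T \<union> F \<or> P ! Suc p \<in> T \<union> F"
proof (rule ccontr)
  assume "\<not> ?thesis"
  moreover have "P ! p \<in> V" "P ! Suc p \<in> V" using assms(2) path(3) by auto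
  ultimately obtain t t' where t: "t \<in> T" "E (P ! p) t" "t' \<in> T" "E (P ! Suc p) t'"
    and nT: "P ! p \<notin> T" "P ! Suc p \<notin> T"
    by (auto simp: F_def)
  have "\<not> E (P ! p) x" using assms E_sym by (auto simp: nbr_idx_def)
  then have "card (succ_idx - succ_nbrs (P ! p)) + 2 \<le> k"
    using card_missed_successors[OF \<open>P ! p \<in> V\<close> nT(1) t(1,2)] by simp
  moreover have "card (succ_idx - succ_nbrs (P ! Suc p)) + 1 \<le> k"
    using card_missed_successors[OF \<open>P ! Suc p \<in> V\<close> nT(2) t(3,4)] by simp
  moreover have "card succ_idx \<le> card (succ_idx - succ_nbrs (P ! p))
      + card (succ_idx - succ_nbrs (P ! Suc p)) + card (succ_nbrs (P ! p) \<inter> succ_nbrs (P ! Suc p))"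
    using finite_succ_idx by (intro card_le_card_Diff_Diff_Int) (auto simp: succ_nbrs_def)
  ultimately have "2 \<le> card (succ_nbrs (P ! p) \<inter> succ_nbrs (P ! Suc p))"
    using card_succ_idx by linarith
  then obtain a b where "a \<in> succ_nbrs (P ! p) \<inter> succ_nbrs (P ! Suc p)"
    "b \<in> succ_nbrs (P ! p) \<inter> succ_nbrs (P ! Suc p)" "a < b"
    by (rule two_le_card_imp_less_pair)
  then show False
    using path_edge_not_adjacent_to_two_successors[of x a b p] x assms(2)
    by (auto simp: succ_nbrs_def dest: succ_idxD)
qed

lemma T_F_alternate:
  assumes "p \<notin> nbr_idx" "Suc p < length P"
  shows "P ! Suc p \<in> T \<union> F \<longleftrightarrow> P ! p \<notin> T \<union> F"
  using path_edge_meets_T_F[OF assms] independent_T_F adj[OF assms(2)]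
  by (auto simp: independent_def)

lemma T_F_alternate_interval:
  assumes "a + j < length P" "\<forall>r. a \<le> r \<and> r < a + j \<longrightarrow> r \<notin> nbr_idx"
  shows "P ! (a + j) \<in> T \<union> F \<longleftrightarrow> (P ! a \<in> T \<union> F \<longleftrightarrow> even j)"
  using assms
proof (induction j)
  case (Suc j)
  then show ?case using T_F_alternate[of "a + j"] by auto
qed simp

section \<open>The segments S_i'\<close>

lemma nbr_pos_eq: "nbr_pos E P x = sorted_list_of_set nbr_idx"
  by (simp add: nbr_pos_def nbr_idx_def)

lemma set_nbr_pos: "set (nbr_pos E P x) = nbr_idx"
  using finite_nbr_idx by (simp add: nbr_pos_eq)

lemma sorted_nbr_pos: "sorted_wrt (<) (nbr_pos E P x)"
  by (simp add: nbr_pos_eq)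

lemma length_nbr_pos: "length (nbr_pos E P x) = card nbr_idx"
  by (simp add: nbr_pos_eq)

lemma nbr_pos_nonempty: "0 < length (nbr_pos E P x)"
  using card_nbr_idx k_pos length_nbr_pos by linarith

lemma xpos_in_nbr_idx:
  assumes "1 \<le> i" "i \<le> length (nbr_pos E P x)"
  shows "xpos E P x i \<in> nbr_idx"
proof -
  have "i - 1 < length (nbr_pos E P x)" using assms by linarith
  then show ?thesis unfolding xpos_def using set_nbr_pos nth_mem by blast
qed

lemma seg'_0_subset_T_F: "seg' E P x 0 \<subseteq> T \<union> F"
proof
  fix z assume "z \<in> seg' E P x 0"
  then obtain j where z: "z = P ! (xpos E P x 1 - j)" "j \<le> card (seg E P x 0)" "odd j"
    by (auto simp: seg'_def)
  define c where "c = xpos E P x 1"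
  have c: "c \<in> nbr_idx"
    unfolding c_def using nbr_pos_nonempty by (intro xpos_in_nbr_idx) linarith+
  have below: "r \<notin> nbr_idx" if "r < c" for r
  proof
    assume "r \<in> nbr_idx"
    then have "nbr_pos E P x ! 0 \<le> r"
      using strict_sorted_first_le[OF sorted_nbr_pos] set_nbr_pos by blast
    then show False using that by (simp add: c_def xpos_def)
  qed
  have "card (seg E P x 0) \<le> c"
    using card_image_le[of "{..<c}" "(!) P"]
    by (simp add: seg_def c_def setcompr_eq_image lessThan_def)
  then have "j \<le> c" using z(2) by simp
  have "P ! c \<notin> T" using below c by (auto simp: nth_in_T_iff nbr_idx_def)
  moreover have "P ! c \<notin> F" using c E_sym by (auto simp: F_def T_def nbr_idx_def)
  ultimately have "P ! (c - j + j) \<notin> T \<union> F" using \<open>j \<le> c\<close> by simp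
  moreover have "P ! (c - j + j) \<in> T \<union> F \<longleftrightarrow> (P ! (c - j) \<in> T \<union> F \<longleftrightarrow> even j)"
    using \<open>j \<le> c\<close> c below by (intro T_F_alternate_interval) (auto simp: nbr_idx_def)
  ultimately show "z \<in> T \<union> F" using z(1,3) by (simp add: c_def)
qed

(* hi is the position of x_(i+1) on P, or length P if i = t. *)
lemma seg_bound:
  assumes "1 \<le> i" "i \<le> length (nbr_pos E P x)"
  obtains hi where "card (seg E P x i) \<le> hi - Suc (xpos E P x i)" "hi \<le> length P"
    "\<And>r. xpos E P x i < r \<Longrightarrow> r < hi \<Longrightarrow> r \<notin> nbr_idx"
proof -
  let ?L = "nbr_pos E P x" and ?c = "xpos E P x i"
  have i: "i - 1 < length ?L" "Suc (i - 1) = i" "i \<noteq> 0" using assms by auto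
  have next_le: "i < length ?L \<and> ?L ! i \<le> r" if "r \<in> nbr_idx" "?c < r" for r
    using strict_sorted_next_le[OF sorted_nbr_pos, of r "i - 1"] set_nbr_pos that i
    by (simp add: xpos_def)
  show thesis
  proof (cases "i < length ?L")
    case True
    have "seg E P x i = {P ! j | j. ?c < j \<and> j < ?L ! i}"
      using True i by (simp add: seg_def xpos_def)
    moreover have "?L ! i < length P"
      using True set_nbr_pos nth_mem by (fastforce simp: nbr_idx_def)
    moreover have "r \<notin> nbr_idx" if "?c < r" "r < ?L ! i" for r
      using next_le[of r] that by auto
    ultimately show thesis using card_nth_image_le by (intro that[of "?L ! i"]) auto
  next
    case False
    then have "seg E P x i = {P ! j | j. ?c < j \<and> j < length P}"
      using assms(2) i by (simp add: seg_def xpos_def)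
    moreover have "r \<notin> nbr_idx" if "?c < r" for r
      using next_le[of r] that False by auto
    ultimately show thesis using card_nth_image_le by (intro that[of "length P"]) auto
  qed
qed

lemma seg'_subset_T_F:
  assumes "1 \<le> i" "i \<le> length (nbr_pos E P x)"
  shows "seg' E P x i \<subseteq> T \<union> F"
proof
  fix z assume "z \<in> seg' E P x i"
  then obtain j where z: "z = P ! (xpos E P x i + j)" "1 \<le> j" "j \<le> card (seg E P x i)" "odd j"
    using assms(1) by (auto simp: seg'_def)
  define c where "c = xpos E P x i"
  obtain hi where hi: "card (seg E P x i) \<le> hi - Suc c" "hi \<le> length P"
    "\<And>r. c < r \<Longrightarrow> r < hi \<Longrightarrow> r \<notin> nbr_idx"
    using seg_bound[OF assms] unfolding c_def by blast
  have "j \<le> hi - Suc c" using hi(1) z(3) by linarith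
  have "c \<in> nbr_idx" using xpos_in_nbr_idx[OF assms] by (simp add: c_def)
  then have "P ! Suc c \<in> T" using \<open>j \<le> hi - Suc c\<close> hi(2) z(2) by (simp add: nth_in_T_iff)
  moreover have "P ! (Suc c + (j - 1)) \<in> T \<union> F \<longleftrightarrow> (P ! Suc c \<in> T \<union> F \<longleftrightarrow> even (j - 1))"
    using \<open>j \<le> hi - Suc c\<close> hi(2,3) z(2) by (intro T_F_alternate_interval) auto
  ultimately show "z \<in> T \<union> F" using z(1,2,4) by (simp add: c_def)
qed

lemma Sprime_subset_T_F: "Sprime E P x \<subseteq> T \<union> F"
proof -
  have "seg' E P x i \<subseteq> T \<union> F" if "i \<le> length (nbr_pos E P x)" for i
    using seg'_0_subset_T_F seg'_subset_T_F[of i] that by (cases "i = 0") auto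
  then show ?thesis by (simp add: Sprime_def Let_def UN_subset_iff)
qed

end

theorem mainTheorem8:
  fixes V :: "'a set" and E :: "'a \<Rightarrow> 'a \<Rightarrow> bool" and k :: nat
    and u v x :: 'a and P :: "'a list"
  assumes "simple_graph V E"
    and "k \<ge> 1"
    and "k_connected V E (2 * k)"
    and "H_free (P2kP1_V k) P2kP1_E V E"
    and "u \<in> V" and "v \<in> V" and "u \<noteq> v"
    and "longest_uv_path V E u v P"
    and "set P \<noteq> V"
    and "x \<in> V - set P"
  shows "independent V E (Sprime E P x)
    \<and> (\<forall>y\<in>V - set P. \<forall>z\<in>Sprime E P x. \<not> E y z)
    \<and> independent V E ((V - set P) \<union> Sprime E P x)"
proof -
  interpret off_path_vertex V E u v P k x
    using assms(1-4,7,8,10) by unfold_locales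
  have "Sprime E P x \<union> (V - set P) \<subseteq> T \<union> F"
    using Sprime_subset_T_F off_path_subset_T_F by blast
  then show ?thesis
    using independent_T_F unfolding independent_def by blast
qed

end
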